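(* Let $\mathcal{A}$ be an alternative $W^{*}$-factor, $\mathcal{B}$ an alternative complex $\ast$-algebra, and $\Phi:\mathcal{A}\to\mathcal{B}$ a bijection preserving product $ab+ba^{*}$ (resp. $ab-ba^{*}$). Let $p_{1}\in\mathcal{A}$ be a projection with $p_{1}\neq 1_{\mathcal{A}}$, $p_{2}=1_{\mathcal{A}}-p_{1}$, and $\mathcal{A}_{ij}=p_{i}\mathcal{A}p_{j}$. Then for all $a_{12},b_{12}\in\mathcal{A}_{12}$ and $c_{21},d_{21}\in\mathcal{A}_{21}$: (i) $\Phi(a_{12}+b_{12})=\Phi(a_{12})+\Phi(b_{12})$ and (ii) $\Phi(c_{21}+d_{21})=\Phi(c_{21})+\Phi(d_{21})$.
   Context: An alternative $W^{*}$-factor is a prime alternative $C^{*}$-algebra (complete normed alternative complex $\ast$-algebra with $\|a^{*}a\|=\|a\|^{2}$) that is a dual Banach space; it is unital. A projection is a nonzero self-adjoint idempotent. $\mathcal{A}_{ij}$ are the Peirce components with respect to $p_{1}$. $\Phi$ preserves product $ab+ba^{*}$ (resp. $ab-ba^{*}$) if $\Phi(ab+ba^{*})=\Phi(a)\Phi(b)+\Phi(b)\Phi(a)^{*}$ (resp. $\Phi(ab-ba^{*})=\Phi(a)\Phi(b)-\Phi(b)\Phi(a)^{*}$) for all $a,b\in\mathcal{A}$. *)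

theory Defs
  imports "HOL-Analysis.Analysis"
begin

definition complex_vs :: "(complex \<Rightarrow> 'a::ab_group_add \<Rightarrow> 'a) \<Rightarrow> bool" where
  "complex_vs sc \<longleftrightarrow>
     (\<forall>c x y. sc c (x + y) = sc c x + sc c y) \<and>
     (\<forall>c d x. sc (c + d) x = sc c x + sc d x) \<and>
     (\<forall>c d x. sc c (sc d x) = sc (c * d) x) \<and>
     (\<forall>x. sc 1 x = x)"

definition alt_star_alg ::
  "(complex \<Rightarrow> 'a::ab_group_add \<Rightarrow> 'a) \<Rightarrow> ('a \<Rightarrow> 'a \<Rightarrow> 'a) \<Rightarrow> ('a \<Rightarrow> 'a) \<Rightarrow> bool" where
  "alt_star_alg sc mul st \<longleftrightarrow>
     complex_vs sc \<and>
     (\<forall>x y z. mul (x + y) z = mul x z + mul y z) \<and>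
     (\<forall>x y z. mul x (y + z) = mul x y + mul x z) \<and>
     (\<forall>c x y. mul (sc c x) y = sc c (mul x y)) \<and>
     (\<forall>c x y. mul x (sc c y) = sc c (mul x y)) \<and>
     (\<forall>x y. mul (mul x x) y = mul x (mul x y)) \<and>
     (\<forall>x y. mul (mul y x) x = mul y (mul x x)) \<and>
     (\<forall>x y. st (x + y) = st x + st y) \<and>
     (\<forall>c x. st (sc c x) = sc (cnj c) (st x)) \<and>
     (\<forall>x. st (st x) = x) \<and>
     (\<forall>x y. st (mul x y) = mul (st y) (st x))"

definition complex_normed_sc :: "(complex \<Rightarrow> 'a::real_normed_vector \<Rightarrow> 'a) \<Rightarrow> bool" where
  "complex_normed_sc sc \<longleftrightarrow>
     complex_vs sc \<and>
     (\<forall>r x. sc (complex_of_real r) x = r *\<^sub>R x) \<and>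
     (\<forall>c x. norm (sc c x) = cmod c * norm x)"

definition alt_cstar_alg ::
  "(complex \<Rightarrow> 'a::banach \<Rightarrow> 'a) \<Rightarrow> ('a \<Rightarrow> 'a \<Rightarrow> 'a) \<Rightarrow> ('a \<Rightarrow> 'a) \<Rightarrow> bool" where
  "alt_cstar_alg sc mul st \<longleftrightarrow>
     alt_star_alg sc mul st \<and> complex_normed_sc sc \<and>
     (\<forall>x y. norm (mul x y) \<le> norm x * norm y) \<and>
     (\<forall>x. norm (mul (st x) x) = (norm x)\<^sup>2)"

definition alg_ideal ::
  "(complex \<Rightarrow> 'a::ab_group_add \<Rightarrow> 'a) \<Rightarrow> ('a \<Rightarrow> 'a \<Rightarrow> 'a) \<Rightarrow> 'a set \<Rightarrow> bool" where
  "alg_ideal sc mul I \<longleftrightarrow>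
     0 \<in> I \<and> (\<forall>x\<in>I. \<forall>y\<in>I. x + y \<in> I) \<and> (\<forall>c. \<forall>x\<in>I. sc c x \<in> I) \<and>
     (\<forall>x\<in>I. \<forall>a. mul a x \<in> I \<and> mul x a \<in> I)"

definition prime_alg ::
  "(complex \<Rightarrow> 'a::ab_group_add \<Rightarrow> 'a) \<Rightarrow> ('a \<Rightarrow> 'a \<Rightarrow> 'a) \<Rightarrow> bool" where
  "prime_alg sc mul \<longleftrightarrow>
     (\<forall>I J. alg_ideal sc mul I \<and> alg_ideal sc mul J \<and> (\<forall>x\<in>I. \<forall>y\<in>J. mul x y = 0)
        \<longrightarrow> I = {0} \<or> J = {0})"

definition bdd_cfunctional ::
  "(complex \<Rightarrow> 'p::real_normed_vector \<Rightarrow> 'p) \<Rightarrow> ('p \<Rightarrow> complex) \<Rightarrow> bool" where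
  "bdd_cfunctional scP f \<longleftrightarrow>
     (\<forall>x y. f (x + y) = f x + f y) \<and> (\<forall>c x. f (scP c x) = c * f x) \<and>
     (\<exists>K. \<forall>x. cmod (f x) \<le> K * norm x)"

definition dual_iso ::
  "(complex \<Rightarrow> 'a::real_normed_vector \<Rightarrow> 'a) \<Rightarrow> (complex \<Rightarrow> 'p::real_normed_vector \<Rightarrow> 'p)
    \<Rightarrow> ('a \<Rightarrow> 'p \<Rightarrow> complex) \<Rightarrow> bool" where
  "dual_iso scA scP T \<longleftrightarrow>
     complex_normed_sc scP \<and>
     (\<forall>x. bdd_cfunctional scP (T x)) \<and>
     (\<forall>f. bdd_cfunctional scP f \<longrightarrow> (\<exists>x. T x = f)) \<and>
     (\<forall>x y. T (x + y) = (\<lambda>p. T x p + T y p)) \<and>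
     (\<forall>c x. T (scA c x) = (\<lambda>p. c * T x p)) \<and>
     (\<forall>x. onorm (T x) = norm x)"

definition is_projection :: "('a::zero \<Rightarrow> 'a \<Rightarrow> 'a) \<Rightarrow> ('a \<Rightarrow> 'a) \<Rightarrow> 'a \<Rightarrow> bool" where
  "is_projection mul st p \<longleftrightarrow> p \<noteq> 0 \<and> st p = p \<and> mul p p = p"

definition peirce :: "('a \<Rightarrow> 'a \<Rightarrow> 'a) \<Rightarrow> 'a \<Rightarrow> 'a \<Rightarrow> 'a set" where
  "peirce mul p q = {mul p (mul x q) | x. True}"

end

theory Submission
  imports Defs
begin

text \<open>Only the algebra matters: the argument works in any unital alternative *-algebra,
  for any self-adjoint idempotent p with complement q = 1 - p.
  Write x \<circ> y = xy + \<epsilon> yx* with \<epsilon> \<in> {1, -1}, so that \<Phi>(x \<circ> y) = \<Phi>x \<star> \<Phi>y for a biadditive \<star>.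
  Every additive map f on A that is intertwined by \<Phi> with an additive map on B (such as
  y \<mapsto> x \<circ> y and y \<mapsto> y \<circ> x) transports relations \<Phi>S = \<Sigma> \<Phi>x_i to \<Phi>(fS) = \<Sigma> \<Phi>(fx_i).
  Composites of such maps isolate each Peirce component, so \<Phi> is additive on sums
  x11 + x12 + x21 + x22.
  For a, b in A12, expanding \<Phi>((p + a) \<circ> (q + b)) in two ways gives
  \<Phi>(a + b) + \<Phi>(\<epsilon>a* + ab) = \<Phi>a + \<Phi>b + \<Phi>(\<epsilon>a*) + \<Phi>(ab), where the second summands lie in A21;
  comparing A12-components yields \<Phi>(a + b) = \<Phi>a + \<Phi>b.\<close>

locale unital_alt_star_alg =
  fixes sc :: "complex \<Rightarrow> 'a::ab_group_add \<Rightarrow> 'a" and mul :: "'a \<Rightarrow> 'a \<Rightarrow> 'a"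
    and st :: "'a \<Rightarrow> 'a" and one :: 'a
  assumes alt_star: "alt_star_alg sc mul st"
    and mul_one: "\<forall>x. mul one x = x \<and> mul x one = x"
begin

lemma sc_add_right: "sc c (x + y) = sc c x + sc c y"
  and sc_add_left: "sc (c + d) x = sc c x + sc d x"
  and sc_sc: "sc c (sc d x) = sc (c * d) x"
  and sc_one [simp]: "sc 1 x = x"
  using alt_star unfolding alt_star_alg_def complex_vs_def by auto

lemma mul_add_left: "mul (x + y) z = mul x z + mul y z"
  and mul_add_right: "mul x (y + z) = mul x y + mul x z"
  and mul_sc_left: "mul (sc c x) y = sc c (mul x y)"
  and mul_sc_right: "mul x (sc c y) = sc c (mul x y)"
  and left_alternative: "mul (mul x x) y = mul x (mul x y)"
  and right_alternative: "mul (mul y x) x = mul y (mul x x)"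
  and st_add: "st (x + y) = st x + st y"
  and st_sc: "st (sc c x) = sc (cnj c) (st x)"
  and st_st [simp]: "st (st x) = x"
  and st_mul: "st (mul x y) = mul (st y) (st x)"
  using alt_star unfolding alt_star_alg_def by auto

lemma mul_one_left [simp]: "mul one x = x"
  and mul_one_right [simp]: "mul x one = x"
  using mul_one by auto

lemma sc_zero_right [simp]: "sc c 0 = 0"
  using sc_add_right[of c 0 0] by simp

lemma sc_zero_left [simp]: "sc 0 x = 0"
  using sc_add_left[of 0 0 x] by simp

lemma sc_minus_right: "sc c (- x) = - sc c x"
  using sc_add_right[of c x "- x"] by (simp add: eq_neg_iff_add_eq_0 add.commute)

lemma sc_diff_right: "sc c (x - y) = sc c x - sc c y"
  using sc_add_right[of c x "- y"] by (simp add: sc_minus_right)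

lemma sc_minus_one: "sc (- 1) x = - x"
  using sc_add_left[of 1 "- 1" x] by (simp add: eq_neg_iff_add_eq_0 add.commute)

lemma mul_zero_left [simp]: "mul 0 x = 0"
  using mul_add_left[of 0 0 x] by simp

lemma mul_zero_right [simp]: "mul x 0 = 0"
  using mul_add_right[of x 0 0] by simp

lemma mul_minus_left: "mul (- x) y = - mul x y"
  using mul_add_left[of x "- x" y] by (simp add: eq_neg_iff_add_eq_0 add.commute)

lemma mul_minus_right: "mul x (- y) = - mul x y"
  using mul_add_right[of x y "- y"] by (simp add: eq_neg_iff_add_eq_0 add.commute)

lemma mul_diff_left: "mul (x - y) z = mul x z - mul y z"
  using mul_add_left[of x "- y" z] by (simp add: mul_minus_left)

lemma mul_diff_right: "mul x (y - z) = mul x y - mul x z"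
  using mul_add_right[of x y "- z"] by (simp add: mul_minus_right)

lemma st_zero [simp]: "st 0 = 0"
  using st_add[of 0 0] by simp

lemma st_minus: "st (- x) = - st x"
  using st_add[of x "- x"] by (simp add: eq_neg_iff_add_eq_0 add.commute)

lemma st_diff: "st (x - y) = st x - st y"
  using st_add[of x "- y"] by (simp add: st_minus)

lemma st_one [simp]: "st one = one"
  using st_mul[of "st one" one] by simp

lemmas bilinear_simps = mul_add_left mul_add_right mul_diff_left mul_diff_right
  mul_minus_left mul_minus_right mul_sc_left mul_sc_right st_add st_diff st_minus st_sc st_mul
  sc_add_right sc_diff_right sc_minus_right

lemma left_alternative_lin:
  "mul (mul x y) z + mul (mul y x) z = mul x (mul y z) + mul y (mul x z)"
  using left_alternative[of "x + y" z] left_alternative[of x z] left_alternative[of y z]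
  by (simp add: mul_add_left mul_add_right algebra_simps)

lemma right_alternative_lin:
  "mul (mul z x) y + mul (mul z y) x = mul z (mul x y) + mul z (mul y x)"
  using right_alternative[of z "x + y"] right_alternative[of z x] right_alternative[of z y]
  by (simp add: mul_add_left mul_add_right algebra_simps)

lemma flexible: "mul (mul x y) x = mul x (mul y x)"
  using right_alternative_lin[of x y x] left_alternative[of x y] by simp

subsection \<open>Peirce decomposition\<close>

definition is_proj :: "'a \<Rightarrow> bool" where
  "is_proj p \<longleftrightarrow> st p = p \<and> mul p p = p"

definition peirce11 :: "'a \<Rightarrow> 'a \<Rightarrow> bool" where
  "peirce11 p x \<longleftrightarrow> mul p x = x \<and> mul x p = x"

definition peirce12 :: "'a \<Rightarrow> 'a \<Rightarrow> bool" where
  "peirce12 p x \<longleftrightarrow> mul p x = x \<and> mul x p = 0"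

definition comp11 :: "'a \<Rightarrow> 'a \<Rightarrow> 'a" where
  "comp11 p x = mul p (mul x p)"

definition comp12 :: "'a \<Rightarrow> 'a \<Rightarrow> 'a" where
  "comp12 p x = mul p x - mul p (mul x p)"

text \<open>With q = 1 - p, the spaces A21 and A22 are peirce12 q and peirce11 q.\<close>

lemma is_proj_compl: "is_proj p \<Longrightarrow> is_proj (one - p)"
  unfolding is_proj_def by (simp add: bilinear_simps)

lemma proj_mul_idem_left: "is_proj p \<Longrightarrow> mul p (mul p x) = mul p x"
  using left_alternative[of p x] unfolding is_proj_def by simp

lemma proj_mul_idem_right: "is_proj p \<Longrightarrow> mul (mul x p) p = mul x p"
  using right_alternative[of x p] unfolding is_proj_def by simp

lemma peirce11_compl_iff: "peirce11 (one - p) x \<longleftrightarrow> mul p x = 0 \<and> mul x p = 0"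
  unfolding peirce11_def by (auto simp: bilinear_simps)

lemma peirce12_compl_iff: "peirce12 (one - p) x \<longleftrightarrow> mul p x = 0 \<and> mul x p = x"
  unfolding peirce12_def by (auto simp: bilinear_simps)

lemma peirce11_comp11: "is_proj p \<Longrightarrow> peirce11 p (comp11 p x)"
proof -
  assume p: "is_proj p"
  have "mul (mul p (mul x p)) p = mul (mul (mul p x) p) p" by (simp add: flexible)
  also have "\<dots> = mul (mul p x) p" by (rule proj_mul_idem_right[OF p])
  also have "\<dots> = mul p (mul x p)" by (simp add: flexible)
  finally show ?thesis
    unfolding peirce11_def comp11_def using proj_mul_idem_left[OF p] by simp
qed

lemma peirce12_comp12: "is_proj p \<Longrightarrow> peirce12 p (comp12 p x)"
  using peirce11_comp11[of p x] unfolding peirce11_def peirce12_def comp11_def comp12_def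
  by (simp add: proj_mul_idem_left bilinear_simps flexible)

lemma peirce_decomposition:
  "x = comp11 p x + comp12 p x + comp12 (one - p) x + comp11 (one - p) x"
  unfolding comp11_def comp12_def by (simp add: bilinear_simps algebra_simps)

lemma comp_peirce11:
  "peirce11 p x \<Longrightarrow>
    comp11 p x = x \<and> comp12 p x = 0 \<and> comp12 (one - p) x = 0 \<and> comp11 (one - p) x = 0"
  unfolding peirce11_def comp11_def comp12_def by (simp add: bilinear_simps)

lemma comp_peirce12:
  "peirce12 p x \<Longrightarrow>
    comp11 p x = 0 \<and> comp12 p x = x \<and> comp12 (one - p) x = 0 \<and> comp11 (one - p) x = 0"
  unfolding peirce12_def comp11_def comp12_def by (simp add: bilinear_simps)

lemma comp_peirce21:
  "peirce12 (one - p) x \<Longrightarrow>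
    comp11 p x = 0 \<and> comp12 p x = 0 \<and> comp12 (one - p) x = x \<and> comp11 (one - p) x = 0"
  using comp_peirce12[of "one - p" x] by simp

lemma comp_peirce22:
  "peirce11 (one - p) x \<Longrightarrow>
    comp11 p x = 0 \<and> comp12 p x = 0 \<and> comp12 (one - p) x = 0 \<and> comp11 (one - p) x = x"
  using comp_peirce11[of "one - p" x] by simp

lemma comp11_zero [simp]: "comp11 p 0 = 0"
  and comp12_zero [simp]: "comp12 p 0 = 0"
  unfolding comp11_def comp12_def by simp_all

lemma comp12_add: "comp12 p (x + y) = comp12 p x + comp12 p y"
  unfolding comp12_def by (simp add: bilinear_simps)

lemma peirce11_zero: "peirce11 p 0"
  and peirce12_zero: "peirce12 p 0"
  unfolding peirce11_def peirce12_def by simp_all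

lemma peirce11_add: "peirce11 p x \<Longrightarrow> peirce11 p y \<Longrightarrow> peirce11 p (x + y)"
  and peirce12_add: "peirce12 p x \<Longrightarrow> peirce12 p y \<Longrightarrow> peirce12 p (x + y)"
  and peirce11_sc: "peirce11 p x \<Longrightarrow> peirce11 p (sc c x)"
  and peirce12_sc: "peirce12 p x \<Longrightarrow> peirce12 p (sc c x)"
  unfolding peirce11_def peirce12_def by (simp_all add: bilinear_simps)

lemma peirce11_st: "is_proj p \<Longrightarrow> peirce11 p x \<Longrightarrow> peirce11 p (st x)"
  unfolding peirce11_def is_proj_def using st_mul[of x p] st_mul[of p x] by simp

lemma peirce12_st: "is_proj p \<Longrightarrow> peirce12 p x \<Longrightarrow> peirce12 (one - p) (st x)"
  unfolding peirce12_compl_iff unfolding peirce12_def is_proj_def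
  using st_mul[of x p] st_mul[of p x] by simp

lemma peirce21_mul: "peirce12 p a \<Longrightarrow> peirce12 p b \<Longrightarrow> peirce12 (one - p) (mul a b)"
  unfolding peirce12_compl_iff
  using left_alternative_lin[of p a b] right_alternative_lin[of a b p]
  unfolding peirce12_def by simp

lemma peirce11_mul_st:
  assumes p: "is_proj p" and a: "peirce12 p a" and b: "peirce12 p b"
  shows "peirce11 p (mul b (st a))"
proof -
  have "mul p (st a) = 0" "mul (st a) p = st a"
    using peirce12_st[OF p a] unfolding peirce12_compl_iff by auto
  then show ?thesis
    unfolding peirce11_def
    using left_alternative_lin[of p b "st a"] right_alternative_lin[of b "st a" p] b
    unfolding peirce12_def by simp
qed

lemma peirce12_of_mem_peirce: "is_proj p \<Longrightarrow> a \<in> peirce mul p (one - p) \<Longrightarrow> peirce12 p a"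
proof -
  assume p: "is_proj p" and "a \<in> peirce mul p (one - p)"
  then obtain x where a: "a = mul p (mul x (one - p))" unfolding peirce_def by auto
  have "mul (mul x (one - p)) p = 0"
    using proj_mul_idem_right[OF p, of x] by (simp add: bilinear_simps)
  then show ?thesis
    unfolding peirce12_def a using proj_mul_idem_left[OF p] flexible[of p "mul x (one - p)"]
    by simp
qed

end

subsection \<open>Bijections preserving x y + \<epsilon> y x*\<close>

locale product_preserver = unital_alt_star_alg sc mul st one
  for sc :: "complex \<Rightarrow> 'a::ab_group_add \<Rightarrow> 'a" and mul st one +
  fixes \<epsilon> :: complex and prodB :: "'b::ab_group_add \<Rightarrow> 'b \<Rightarrow> 'b" and \<Phi> :: "'a \<Rightarrow> 'b"
  assumes sign: "\<epsilon> = 1 \<or> \<epsilon> = - 1"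
    and prodB_add_right: "prodB u (v + w) = prodB u v + prodB u w"
    and prodB_add_left: "prodB (u + v) w = prodB u w + prodB v w"
    and bij: "bij \<Phi>"
    and preserves: "\<Phi> (mul x y + sc \<epsilon> (mul y (st x))) = prodB (\<Phi> x) (\<Phi> y)"
begin

definition circ :: "'a \<Rightarrow> 'a \<Rightarrow> 'a" where
  "circ x y = mul x y + sc \<epsilon> (mul y (st x))"

lemma Phi_circ: "\<Phi> (circ x y) = prodB (\<Phi> x) (\<Phi> y)"
  unfolding circ_def by (rule preserves)

lemma circ_add_right: "circ z (x + y) = circ z x + circ z y"
  and circ_add_left: "circ (x + y) z = circ x z + circ y z"
  unfolding circ_def by (simp_all add: bilinear_simps algebra_simps)

lemma circ_zero_left [simp]: "circ 0 z = 0"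
  and circ_zero_right [simp]: "circ z 0 = 0"
  unfolding circ_def by simp_all

lemma Phi_inject: "\<Phi> x = \<Phi> y \<Longrightarrow> x = y"
  using bij by (simp add: bij_def inj_def)

lemma Phi_surj: "\<exists>x. \<Phi> x = u"
  using bij by (metis bij_pointE)

lemma Phi_zero [simp]: "\<Phi> 0 = 0"
proof -
  obtain y where y: "\<Phi> y = 0" using Phi_surj by blast
  have "\<Phi> 0 = prodB (\<Phi> 0) 0" by (metis Phi_circ circ_zero_left y)
  also have "\<dots> = 0" using prodB_add_right[of "\<Phi> 0" 0 0] by simp
  finally show ?thesis .
qed

definition intertwining :: "('a \<Rightarrow> 'a) \<Rightarrow> bool" where
  "intertwining f \<longleftrightarrow> (\<forall>x y. f (x + y) = f x + f y) \<and>
     (\<exists>g. (\<forall>x. \<Phi> (f x) = g (\<Phi> x)) \<and> (\<forall>u v. g (u + v) = g u + g v))"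

lemma intertwining_circ_left: "intertwining (circ z)"
  unfolding intertwining_def using circ_add_right Phi_circ prodB_add_right by blast

lemma intertwining_circ_right: "intertwining (\<lambda>x. circ x w)"
  unfolding intertwining_def
proof (intro conjI exI)
  show "\<forall>x. \<Phi> (circ x w) = prodB (\<Phi> x) (\<Phi> w)" by (simp add: Phi_circ)
qed (simp_all add: circ_add_left prodB_add_left)

lemma intertwining_comp:
  assumes "intertwining f" and "intertwining g"
  shows "intertwining (\<lambda>x. f (g x))"
proof -
  obtain F where "\<forall>x. \<Phi> (f x) = F (\<Phi> x)" "\<forall>u v. F (u + v) = F u + F v"
    using assms(1) unfolding intertwining_def by blast
  moreover obtain G where "\<forall>x. \<Phi> (g x) = G (\<Phi> x)" "\<forall>u v. G (u + v) = G u + G v"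
    using assms(2) unfolding intertwining_def by blast
  ultimately show ?thesis
    using assms unfolding intertwining_def by (intro conjI exI[of _ "\<lambda>u. F (G u)"]) simp_all
qed

lemma intertwining_zero: "intertwining f \<Longrightarrow> f 0 = 0"
  unfolding intertwining_def by (metis add_cancel_right_right)

lemma intertwining_Phi_sum:
  "intertwining f \<Longrightarrow> \<Phi> S = \<Phi> x1 + \<Phi> x2 + \<Phi> x3 + \<Phi> x4 \<Longrightarrow>
    \<Phi> (f S) = \<Phi> (f x1) + \<Phi> (f x2) + \<Phi> (f x3) + \<Phi> (f x4)"
  unfolding intertwining_def by metis

definition diag :: "complex \<Rightarrow> complex \<Rightarrow> 'a \<Rightarrow> 'a" where
  "diag l m p = sc l p + sc m (one - p)"

lemma diag_compl: "diag l m p = diag m l (one - p)"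
  unfolding diag_def by (simp add: add.commute)

lemma circ_diag_peirce11: "is_proj p \<Longrightarrow> peirce11 p x \<Longrightarrow> circ (diag l m p) x = sc (l + \<epsilon> * cnj l) x"
  unfolding circ_def diag_def peirce11_def is_proj_def by (simp add: bilinear_simps sc_sc sc_add_left)

lemma circ_diag_peirce12: "is_proj p \<Longrightarrow> peirce12 p x \<Longrightarrow> circ (diag l m p) x = sc (l + \<epsilon> * cnj m) x"
  unfolding circ_def diag_def peirce12_def is_proj_def by (simp add: bilinear_simps sc_sc sc_add_left)

lemma circ_diag_scalars: "\<exists>l m. l + \<epsilon> * cnj l \<noteq> 0 \<and> m + \<epsilon> * cnj m = 0"
proof (cases "\<epsilon> = 1")
  case True
  then show ?thesis by (intro exI[of _ 1] exI[of _ \<i>]) simp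
next
  case False
  then have "\<epsilon> = - 1" using sign by auto
  then show ?thesis by (intro exI[of _ \<i>] exI[of _ 1]) (simp add: complex_eq_iff)
qed

lemma comp11_extractor:
  assumes p: "is_proj p"
  shows "\<exists>P k. intertwining P \<and> k \<noteq> 0 \<and> (\<forall>x. P x = sc k (comp11 p x))"
proof -
  have q: "is_proj (one - p)" using is_proj_compl[OF p] .
  obtain l m where l: "l + \<epsilon> * cnj l \<noteq> 0" and m: "m + \<epsilon> * cnj m = 0"
    using circ_diag_scalars by blast
  define k where "k = l + \<epsilon> * cnj l"
  define m' where "m' = - (\<epsilon> * cnj l)"
  have m'1: "l + \<epsilon> * cnj m' = 0" unfolding m'_def using sign by auto
  have m'2: "m' + \<epsilon> * cnj l = 0" unfolding m'_def by simp
  \<comment> \<open>Both factors scale A11 by k; the inner one kills A12 and A21, the outer one A22.\<close>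
  define P where "P x = circ (diag l m p) (circ (diag l m' p) x)" for x
  have P: "intertwining P"
    unfolding P_def by (rule intertwining_comp[OF intertwining_circ_left intertwining_circ_left])
  have P_add: "P (x + y) = P x + P y" for x y using P unfolding intertwining_def by blast
  have P11: "P (comp11 p x) = sc (k * k) (comp11 p x)" for x
    unfolding P_def k_def
    using circ_diag_peirce11[OF p peirce11_comp11[OF p]]
      circ_diag_peirce11[OF p peirce11_sc[OF peirce11_comp11[OF p]]]
    by (simp add: sc_sc)
  have P12: "P (comp12 p x) = 0" for x
    unfolding P_def using circ_diag_peirce12[OF p peirce12_comp12[OF p]] m'1 by simp
  have P21: "P (comp12 (one - p) x) = 0" for x
    unfolding P_def using circ_diag_peirce12[OF q peirce12_comp12[OF q]] m'2 diag_compl[of l m' p]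
    by simp
  have P22: "P (comp11 (one - p) x) = 0" for x
  proof -
    have x: "peirce11 (one - p) (comp11 (one - p) x)" by (rule peirce11_comp11[OF q])
    have "circ (diag l m' p) (comp11 (one - p) x) = sc (m' + \<epsilon> * cnj m') (comp11 (one - p) x)"
      using circ_diag_peirce11[OF q x] diag_compl[of l m' p] by simp
    then show ?thesis
      unfolding P_def using circ_diag_peirce11[OF q peirce11_sc[OF x]] diag_compl[of l m p] m
      by simp
  qed
  have "P x = sc (k * k) (comp11 p x)" for x
    using peirce_decomposition[of x p] P_add P11 P12 P21 P22
    by (metis add.left_neutral add.right_neutral)
  moreover have "k * k \<noteq> 0" using l unfolding k_def by simp
  ultimately show ?thesis using P by blast
qed

lemma comp12_extractor:
  assumes p: "is_proj p"
  shows "\<exists>P. intertwining P \<and> (\<forall>x. P x = P (comp12 p x)) \<and> (\<forall>x. comp12 p (P x) = comp12 p x)"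
proof -
  have q: "is_proj (one - p)" using is_proj_compl[OF p] .
  have st_peirce11: "mul p (st y) = st y" "mul (st y) p = st y" if "peirce11 p y" for y
    using peirce11_st[OF p that] unfolding peirce11_def by auto
  have st_peirce12: "mul p (st y) = 0" "mul (st y) p = st y" if "peirce12 p y" for y
    using peirce12_st[OF p that] unfolding peirce12_compl_iff by auto
  have st_peirce21: "mul p (st y) = st y" "mul (st y) p = 0" if "peirce12 (one - p) y" for y
    using peirce12_st[OF q that] unfolding peirce12_def by simp_all
  have st_peirce22: "mul p (st y) = 0" "mul (st y) p = 0" if "peirce11 (one - p) y" for y
    using peirce11_st[OF q that] unfolding peirce11_compl_iff by simp_all
  define P where "P x = circ (circ x (one - p)) p" for x
  have P: "intertwining P"
    unfolding P_def by (rule intertwining_comp[OF intertwining_circ_right intertwining_circ_right])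
  have P_add: "P (x + y) = P x + P y" for x y using P unfolding intertwining_def by blast
  have P11: "P y = 0" if "peirce11 p y" for y
    using that st_peirce11[OF that] unfolding P_def circ_def peirce11_def by (simp add: bilinear_simps)
  have P21: "P y = 0" if "peirce12 (one - p) y" for y
    using that st_peirce21[OF that] unfolding P_def circ_def peirce12_compl_iff
    by (simp add: bilinear_simps)
  have P22: "P y = 0" if y: "peirce11 (one - p) y" for y
  proof -
    define y' where "y' = y + sc \<epsilon> (st y)"
    have "circ y (one - p) = y'"
      using y st_peirce22[OF y] unfolding y'_def circ_def peirce11_compl_iff
      by (simp add: bilinear_simps)
    moreover have y': "peirce11 (one - p) y'"
      unfolding y'_def by (simp add: y peirce11_add peirce11_sc peirce11_st q)
    ultimately show ?thesis
      using y' st_peirce22[OF y'] unfolding P_def circ_def peirce11_compl_iff by simp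
  qed
  have P12: "P y = sc \<epsilon> (st y) + y" if y: "peirce12 p y" for y
  proof -
    have "circ y (one - p) = y + sc \<epsilon> (st y)"
      using y st_peirce12[OF y] unfolding circ_def peirce12_def by (simp add: bilinear_simps)
    then show ?thesis
      using y st_peirce12[OF y] sign unfolding P_def circ_def peirce12_def
      by (auto simp: bilinear_simps sc_sc)
  qed
  have P_comp12: "P x = P (comp12 p x)" for x
    using peirce_decomposition[of x p] P_add P11[OF peirce11_comp11[OF p]]
      P21[OF peirce12_comp12[OF q]] P22[OF peirce11_comp11[OF q]]
    by (metis add.left_neutral add.right_neutral)
  have "comp12 p (P y) = y" if y: "peirce12 p y" for y
  proof -
    have "peirce12 (one - p) (sc \<epsilon> (st y))" using peirce12_sc peirce12_st[OF p y] by blast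
    then show ?thesis
      using P12[OF y] comp_peirce21 comp_peirce12[OF y] by (simp add: comp12_add)
  qed
  then have "comp12 p (P x) = comp12 p x" for x
    using P_comp12[of x] peirce12_comp12[OF p] by metis
  then show ?thesis using P P_comp12 by blast
qed

lemma comp11_determined:
  assumes p: "is_proj p" and S: "\<Phi> S = \<Phi> y1 + \<Phi> y2 + \<Phi> y3 + \<Phi> y4"
    and y: "comp11 p y2 = 0" "comp11 p y3 = 0" "comp11 p y4 = 0"
  shows "comp11 p S = comp11 p y1"
proof -
  obtain P k where P: "intertwining P" and k: "k \<noteq> 0" and P_eq: "\<forall>x. P x = sc k (comp11 p x)"
    using comp11_extractor[OF p] by blast
  have "\<Phi> (P S) = \<Phi> (P y1)" using intertwining_Phi_sum[OF P S] P_eq y by simp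
  then have "sc k (comp11 p S) = sc k (comp11 p y1)" using Phi_inject P_eq by metis
  then have "sc (inverse k) (sc k (comp11 p S)) = sc (inverse k) (sc k (comp11 p y1))" by simp
  then show ?thesis using k by (simp add: sc_sc)
qed

lemma comp12_determined:
  assumes p: "is_proj p" and S: "\<Phi> S = \<Phi> y1 + \<Phi> y2 + \<Phi> y3 + \<Phi> y4"
    and y: "comp12 p y2 = 0" "comp12 p y3 = 0" "comp12 p y4 = 0"
  shows "comp12 p S = comp12 p y1"
proof -
  obtain P where P: "intertwining P" and P1: "\<forall>x. P x = P (comp12 p x)"
    and P2: "\<forall>x. comp12 p (P x) = comp12 p x"
    using comp12_extractor[OF p] by blast
  have "\<Phi> (P S) = \<Phi> (P y1)"
    using intertwining_Phi_sum[OF P S] P1 y intertwining_zero[OF P] by (metis add.right_neutral Phi_zero)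
  then show ?thesis using Phi_inject P2 by metis
qed

lemma Phi_add_peirce:
  assumes p: "is_proj p"
    and x: "peirce11 p x1" "peirce12 p x2" "peirce12 (one - p) x3" "peirce11 (one - p) x4"
  shows "\<Phi> (x1 + x2 + x3 + x4) = \<Phi> x1 + \<Phi> x2 + \<Phi> x3 + \<Phi> x4"
proof -
  have q: "is_proj (one - p)" by (rule is_proj_compl[OF p])
  obtain S where S: "\<Phi> S = \<Phi> x1 + \<Phi> x2 + \<Phi> x3 + \<Phi> x4" using Phi_surj by blast
  note c = comp_peirce11[OF x(1)] comp_peirce12[OF x(2)] comp_peirce21[OF x(3)] comp_peirce22[OF x(4)]
  have "comp11 p S = x1" using comp11_determined[OF p S] c by simp
  moreover have "comp12 p S = x2" using comp12_determined[OF p, of S x2 x1 x3 x4] S c by (simp add: ac_simps)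
  moreover have "comp12 (one - p) S = x3"
    using comp12_determined[OF q, of S x3 x1 x2 x4] S c by (simp add: ac_simps)
  moreover have "comp11 (one - p) S = x4"
    using comp11_determined[OF q, of S x4 x1 x2 x3] S c by (simp add: ac_simps)
  ultimately have "S = x1 + x2 + x3 + x4" using peirce_decomposition[of S p] by simp
  then show ?thesis using S by simp
qed

lemma peirce12_of_Phi_sum:
  assumes p: "is_proj p" and x: "peirce12 p x" "peirce12 p y" and T: "\<Phi> T = \<Phi> x + \<Phi> y"
  shows "peirce12 p T"
proof -
  have q: "is_proj (one - p)" by (rule is_proj_compl[OF p])
  have T': "\<Phi> T = \<Phi> 0 + \<Phi> x + \<Phi> y + \<Phi> 0" using T by simp
  note c = comp_peirce12[OF x(1)] comp_peirce12[OF x(2)]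
  have "comp11 p T = 0" using comp11_determined[OF p T'] c by simp
  moreover have "comp12 (one - p) T = 0" using comp12_determined[OF q T'] c by simp
  moreover have "comp11 (one - p) T = 0" using comp11_determined[OF q T'] c by simp
  ultimately have "T = comp12 p T" using peirce_decomposition[of T p] by simp
  then show ?thesis using peirce12_comp12[OF p, of T] by simp
qed

lemma Phi_add_peirce12_of_cross:
  assumes p: "is_proj p" and ab: "peirce12 p a" "peirce12 p b"
    and uv: "peirce12 (one - p) u" "peirce12 (one - p) v"
    and cross: "\<Phi> (a + b) + \<Phi> (u + v) = \<Phi> a + \<Phi> b + \<Phi> u + \<Phi> v"
  shows "\<Phi> (a + b) = \<Phi> a + \<Phi> b"
proof -
  obtain T where T: "\<Phi> T = \<Phi> a + \<Phi> b" using Phi_surj by blast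
  obtain W where W: "\<Phi> W = \<Phi> u + \<Phi> v" using Phi_surj by blast
  have T12: "peirce12 p T" by (rule peirce12_of_Phi_sum[OF p ab T])
  have W21: "peirce12 (one - p) W" by (rule peirce12_of_Phi_sum[OF is_proj_compl[OF p] uv W])
  have "\<Phi> (0 + T + W + 0) = \<Phi> T + \<Phi> W"
    using Phi_add_peirce[OF p peirce11_zero T12 W21 peirce11_zero] by simp
  also have "\<dots> = \<Phi> (a + b) + \<Phi> (u + v)" using T W cross by (simp add: algebra_simps)
  also have "\<dots> = \<Phi> (0 + (a + b) + (u + v) + 0)"
    using Phi_add_peirce[OF p peirce11_zero peirce12_add[OF ab] peirce12_add[OF uv] peirce11_zero]
    by simp
  finally have "T + W = a + b + (u + v)" using Phi_inject by simp
  then have "comp12 p (T + W) = comp12 p (a + b + (u + v))" by simp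
  then have "T = a + b"
    using comp_peirce12[OF T12] comp_peirce21[OF W21] comp_peirce12[OF ab(1)] comp_peirce12[OF ab(2)]
      comp_peirce21[OF uv(1)] comp_peirce21[OF uv(2)]
    by (simp add: comp12_add)
  then show ?thesis using T by simp
qed

lemma Phi_add_peirce12:
  assumes p: "is_proj p" and a: "peirce12 p a" and b: "peirce12 p b"
  shows "\<Phi> (a + b) = \<Phi> a + \<Phi> b"
proof -
  define q where "q = one - p"
  define a' where "a' = sc \<epsilon> (st a)"
  define m where "m = mul a b"
  define n where "n = sc \<epsilon> (mul b (st a))"
  have pp: "mul p p = p" "st p = p" using p unfolding is_proj_def by auto
  have p11: "peirce11 p p" unfolding peirce11_def using pp by simp
  have q22: "peirce11 q q" unfolding q_def peirce11_compl_iff using pp by (simp add: bilinear_simps)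
  have a'21: "peirce12 q a'" unfolding a'_def q_def using peirce12_sc peirce12_st[OF p a] by blast
  have m21: "peirce12 q m" unfolding m_def q_def using peirce21_mul[OF a b] .
  have n11: "peirce11 p n" unfolding n_def using peirce11_sc peirce11_mul_st[OF p a b] by blast
  note Phi_add = Phi_add_peirce[OF p, folded q_def]
  have circ_pq: "circ p q = 0" unfolding circ_def q_def using pp by (simp add: bilinear_simps)
  have circ_pb: "circ p b = b" unfolding circ_def using pp b unfolding peirce12_def by simp
  have circ_aq: "circ a q = a + a'"
    using a peirce12_st[OF p a] pp unfolding circ_def a'_def q_def peirce12_def peirce12_compl_iff
    by (simp add: bilinear_simps)
  have circ_ab: "circ a b = m + n" unfolding circ_def m_def n_def ..
  have "circ (p + a) (q + b) = n + (a + b) + (a' + m) + 0"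
    by (simp only: circ_add_left circ_add_right circ_pq circ_pb circ_aq circ_ab) (simp add: algebra_simps)
  then have "\<Phi> (circ (p + a) (q + b)) = \<Phi> n + \<Phi> (a + b) + \<Phi> (a' + m)"
    using Phi_add[OF n11 peirce12_add[OF a b] peirce12_add[OF a'21 m21] peirce11_zero] by simp
  moreover have "\<Phi> (circ (p + a) (q + b)) = \<Phi> b + \<Phi> n + \<Phi> m + \<Phi> a + \<Phi> a'"
  proof -
    have "\<Phi> (p + a) = \<Phi> p + \<Phi> a"
      using Phi_add[OF p11 a peirce12_zero peirce11_zero] by simp
    moreover have "\<Phi> (q + b) = \<Phi> b + \<Phi> q"
      using Phi_add[OF peirce11_zero b peirce12_zero q22] by (simp add: add.commute)
    ultimately have "\<Phi> (circ (p + a) (q + b))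
        = \<Phi> (circ p b) + \<Phi> (circ p q) + \<Phi> (circ a b) + \<Phi> (circ a q)"
      by (simp add: Phi_circ prodB_add_left prodB_add_right add.assoc)
    moreover have "\<Phi> (m + n) = \<Phi> n + \<Phi> m"
      using Phi_add[OF n11 peirce12_zero m21 peirce11_zero] by (simp add: add.commute)
    moreover have "\<Phi> (a + a') = \<Phi> a + \<Phi> a'"
      using Phi_add[OF peirce11_zero a a'21 peirce11_zero] by simp
    ultimately show ?thesis using circ_pq circ_pb circ_aq circ_ab by (simp add: add.assoc)
  qed
  ultimately have "\<Phi> (a + b) + \<Phi> (a' + m) = \<Phi> a + \<Phi> b + \<Phi> a' + \<Phi> m"
    by (simp add: algebra_simps)
  then show ?thesis
    using Phi_add_peirce12_of_cross[OF p a b] a'21 m21 unfolding q_def by blast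
qed

lemma Phi_add_off_diagonal:
  assumes p: "is_proj p"
  shows "(\<forall>a\<in>peirce mul p (one - p). \<forall>b\<in>peirce mul p (one - p). \<Phi> (a + b) = \<Phi> a + \<Phi> b)
       \<and> (\<forall>c\<in>peirce mul (one - p) p. \<forall>d\<in>peirce mul (one - p) p. \<Phi> (c + d) = \<Phi> c + \<Phi> d)"
  using Phi_add_peirce12[OF p] peirce12_of_mem_peirce[OF p]
    Phi_add_peirce12[OF is_proj_compl[OF p]] peirce12_of_mem_peirce[OF is_proj_compl[OF p]]
  by simp

end

theorem claim2p6:
  fixes scA :: "complex \<Rightarrow> 'a::banach \<Rightarrow> 'a"
    and mulA :: "'a \<Rightarrow> 'a \<Rightarrow> 'a" and stA :: "'a \<Rightarrow> 'a" and oneA :: 'a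
    and scP :: "complex \<Rightarrow> 'p::real_normed_vector \<Rightarrow> 'p" and T :: "'a \<Rightarrow> 'p \<Rightarrow> complex"
    and scB :: "complex \<Rightarrow> 'b::ab_group_add \<Rightarrow> 'b"
    and mulB :: "'b \<Rightarrow> 'b \<Rightarrow> 'b" and stB :: "'b \<Rightarrow> 'b"
    and \<Phi> :: "'a \<Rightarrow> 'b" and p1 p2 :: 'a
  assumes A_cstar: "alt_cstar_alg scA mulA stA"
    and A_prime: "prime_alg scA mulA"
    and A_dual: "dual_iso scA scP T"
    and A_unit: "\<forall>x. mulA oneA x = x \<and> mulA x oneA = x"
    and B_alg: "alt_star_alg scB mulB stB"
    and bij: "bij \<Phi>"
    and pres: "(\<forall>a b. \<Phi> (mulA a b + mulA b (stA a)) = mulB (\<Phi> a) (\<Phi> b) + mulB (\<Phi> b) (stB (\<Phi> a)))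
             \<or> (\<forall>a b. \<Phi> (mulA a b - mulA b (stA a)) = mulB (\<Phi> a) (\<Phi> b) - mulB (\<Phi> b) (stB (\<Phi> a)))"
    and p1: "is_projection mulA stA p1" and p1_ne: "p1 \<noteq> oneA"
    and p2: "p2 = oneA - p1"
  shows "(\<forall>a12\<in>peirce mulA p1 p2. \<forall>b12\<in>peirce mulA p1 p2. \<Phi> (a12 + b12) = \<Phi> a12 + \<Phi> b12)
       \<and> (\<forall>c21\<in>peirce mulA p2 p1. \<forall>d21\<in>peirce mulA p2 p1. \<Phi> (c21 + d21) = \<Phi> c21 + \<Phi> d21)"
proof -
  have A: "unital_alt_star_alg scA mulA stA oneA"
    unfolding unital_alt_star_alg_def using A_cstar A_unit unfolding alt_cstar_alg_def by blast
  interpret unital_alt_star_alg scA mulA stA oneA by (rule A)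
  have proj: "is_proj p1" using p1 unfolding is_projection_def is_proj_def by blast
  have B: "mulB (x + y) z = mulB x z + mulB y z" "mulB x (y + z) = mulB x y + mulB x z"
    "stB (x + y) = stB x + stB y" for x y z
    using B_alg unfolding alt_star_alg_def by auto
  from pres obtain \<epsilon> prodB where "product_preserver scA mulA stA oneA \<epsilon> prodB \<Phi>"
  proof
    assume "\<forall>a b. \<Phi> (mulA a b + mulA b (stA a)) = mulB (\<Phi> a) (\<Phi> b) + mulB (\<Phi> b) (stB (\<Phi> a))"
    then have "product_preserver scA mulA stA oneA 1 (\<lambda>u v. mulB u v + mulB v (stB u)) \<Phi>"
      unfolding product_preserver_def product_preserver_axioms_def using A bij by (simp add: B algebra_simps)
    then show thesis by (rule that)
  next
    assume "\<forall>a b. \<Phi> (mulA a b - mulA b (stA a)) = mulB (\<Phi> a) (\<Phi> b) - mulB (\<Phi> b) (stB (\<Phi> a))"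
    then have "product_preserver scA mulA stA oneA (- 1) (\<lambda>u v. mulB u v - mulB v (stB u)) \<Phi>"
      unfolding product_preserver_def product_preserver_axioms_def using A bij
      by (simp add: B algebra_simps sc_minus_one)
    then show thesis by (rule that)
  qed
  then show ?thesis using product_preserver.Phi_add_off_diagonal[OF _ proj] p2 by simp
qed

end
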